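(* Let $G$ be a group with finite generating set $Y$ and let $\mathscr S$ be a retractive family of subsets of $Y$ relative to $Y$. Suppose $\bigcup\mathscr S=Y$ and the elements of $\mathscr S$ are pairwise incomparable under inclusion. Suppose (i) $[a,b]=1$ whenever $\{a,b\}\subseteq Y$ is transverse to $\mathscr S$, and (ii) $[a,\langle S\rangle^2]=1$ for every $S\in\mathscr S$ and every $a\in Y-S$, where $\langle S\rangle^2$ is the commutator subgroup of the subgroup $\langle S\rangle\cong G_S$. Then $\rho_{\mathscr S}=\prod_{S\in\mathscr S}\rho_S\colon G\to\prod_{S\in\mathscr S}G_S$ is injective.
   Context: Conventions: $[x,y]=x^{-1}y^{-1}xy$. For $S\subseteq Y$, $G_S$ is the quotient of $G$ by the normal closure of $Y-S$, with projection $\rho_S$. $S$ is retractive if $\rho_S$ restricts to an injection on $\langle S\rangle$ (so $\langle S\rangle$ is identified with $G_S$); a retractive family is a family of retractive subsets all of whose intersections are retractive. A subset $T\subseteq Y$ is transverse to $\mathscr S$ if $T\not\subseteq S$ for every $S\in\mathscr S$. *)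

theory Defs
  imports "HOL-Algebra.Algebra"
begin

definition commutator :: "('a, 'b) monoid_scheme \<Rightarrow> 'a \<Rightarrow> 'a \<Rightarrow> 'a" where
  "commutator G x y = inv\<^bsub>G\<^esub> x \<otimes>\<^bsub>G\<^esub> inv\<^bsub>G\<^esub> y \<otimes>\<^bsub>G\<^esub> x \<otimes>\<^bsub>G\<^esub> y"

definition normal_closure :: "('a, 'b) monoid_scheme \<Rightarrow> 'a set \<Rightarrow> 'a set" where
  "normal_closure G A = carrier G \<inter> \<Inter> {N. N \<lhd> G \<and> A \<subseteq> N}"

definition quotG :: "('a, 'b) monoid_scheme \<Rightarrow> 'a set \<Rightarrow> 'a set \<Rightarrow> ('a set) monoid" where
  "quotG G Y S = G Mod (normal_closure G (Y - S))"

definition rhoS :: "('a, 'b) monoid_scheme \<Rightarrow> 'a set \<Rightarrow> 'a set \<Rightarrow> 'a \<Rightarrow> 'a set" where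
  "rhoS G Y S x = normal_closure G (Y - S) #>\<^bsub>G\<^esub> x"

definition retractive :: "('a, 'b) monoid_scheme \<Rightarrow> 'a set \<Rightarrow> 'a set \<Rightarrow> bool" where
  "retractive G Y S \<longleftrightarrow> S \<subseteq> Y \<and> inj_on (rhoS G Y S) (generate G S)"

definition retractive_family :: "('a, 'b) monoid_scheme \<Rightarrow> 'a set \<Rightarrow> 'a set set \<Rightarrow> bool" where
  "retractive_family G Y \<S> \<longleftrightarrow>
     (\<forall>S\<in>\<S>. S \<subseteq> Y) \<and> (\<forall>\<T>. \<T> \<subseteq> \<S> \<and> \<T> \<noteq> {} \<longrightarrow> retractive G Y (\<Inter>\<T>))"

definition transverse :: "'a set \<Rightarrow> 'a set set \<Rightarrow> bool" where
  "transverse T \<S> \<longleftrightarrow> (\<forall>S\<in>\<S>. \<not> T \<subseteq> S)"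

definition rho_family :: "('a, 'b) monoid_scheme \<Rightarrow> 'a set \<Rightarrow> 'a set set \<Rightarrow> 'a \<Rightarrow> 'a set \<Rightarrow> 'a set" where
  "rho_family G Y \<S> x = (\<lambda>S. if S \<in> \<S> then rhoS G Y S x else undefined)"

end

theory Submission
  imports Defs
begin

text \<open>
  Since \<open>S\<close> is retractive, \<open>G\<close> is a semidirect product of the normal closure of \<open>Y - S\<close>
  by \<open>\<langle>S\<rangle>\<close>, so \<open>\<rho>\<^sub>S\<close> amounts to an endomorphism \<open>r\<^sub>S\<close> of \<open>G\<close> fixing \<open>\<langle>S\<rangle>\<close> and killing \<open>Y - S\<close>;
  we must show that \<open>g = 1\<close> whenever \<open>r\<^sub>S g = 1\<close> for all \<open>S\<close>.

  Let \<open>M\<close> be the subgroup generated by the commutator subgroups \<open>\<langle>S\<rangle>\<^sup>2\<close>. By (ii) each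
  \<open>\<langle>S\<rangle>\<^sup>2\<close> is normal in \<open>G\<close>, and by (i) any two generators commute modulo \<open>M\<close>, so
  \<open>G/M\<close> is abelian. Hence, starting from the projection \<open>\<pi> : G \<rightarrow> G/M\<close> and replacing
  \<open>\<psi>\<close> by \<open>x \<mapsto> \<psi>(x) \<psi>(r\<^sub>S x)\<^sup>-\<^sup>1\<close> for each \<open>S\<close> in turn, we get a homomorphism that kills
  every generator, hence is trivial, but agrees with \<open>\<pi>\<close> at \<open>g\<close>; so \<open>g \<in> M\<close>.
  Finally write \<open>g = d m\<close> with \<open>d \<in> \<langle>S\<rangle>\<^sup>2\<close> and \<open>m\<close> in the subgroup generated by the other
  commutator subgroups, which \<open>r\<^sub>S\<close> preserves: \<open>1 = r\<^sub>S g = d r\<^sub>S(m)\<close> puts \<open>d\<close>, and so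
  \<open>g\<close>, in that smaller subgroup, and induction on the family gives \<open>g = 1\<close>.
\<close>

lemma (in group) normal_closure_normal:
  assumes "A \<subseteq> carrier G"
  shows "normal_closure G A \<lhd> G"
proof -
  let ?\<N> = "{N. N \<lhd> G \<and> A \<subseteq> N}"
  have carrier: "carrier G \<in> ?\<N>" using assms normal_self by blast
  then have eq: "normal_closure G A = \<Inter>?\<N>"
    unfolding normal_closure_def by blast
  show ?thesis unfolding eq
  proof (rule normal_invI)
    show "subgroup (\<Inter>?\<N>) G"
      by (rule subgroups_Inter) (use carrier normal_imp_subgroup in auto)
  next
    fix x h assume "x \<in> carrier G" "h \<in> \<Inter>?\<N>"
    then show "x \<otimes> h \<otimes> inv x \<in> \<Inter>?\<N>"
      using normal_inv_iff by blast
  qed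
qed

lemma (in group) subset_normal_closure:
  "A \<subseteq> carrier G \<Longrightarrow> A \<subseteq> normal_closure G A"
  unfolding normal_closure_def by blast

lemma (in group) commutator_eq_one_iff:
  assumes "a \<in> carrier G" "b \<in> carrier G"
  shows "commutator G a b = \<one> \<longleftrightarrow> a \<otimes> b = b \<otimes> a"
proof -
  have "commutator G a b = inv (b \<otimes> a) \<otimes> (a \<otimes> b)"
    using assms by (simp add: commutator_def inv_mult_group m_assoc)
  then show ?thesis using assms by (simp add: inv_solve_left')
qed

lemma (in group) derived_set_elem_eq_one_iff:
  assumes "a \<in> carrier G" "b \<in> carrier G"
  shows "a \<otimes> b \<otimes> inv a \<otimes> inv b = \<one> \<longleftrightarrow> a \<otimes> b = b \<otimes> a"
proof -
  have "a \<otimes> b \<otimes> inv a \<otimes> inv b = (a \<otimes> b) \<otimes> inv (b \<otimes> a)"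
    using assms by (simp add: inv_mult_group m_assoc)
  then show ?thesis using assms by (simp add: inv_solve_right')
qed

lemma (in group) commute_with_generate:
  assumes A: "A \<subseteq> carrier G" and c: "c \<in> carrier G"
    and commute: "\<And>x. x \<in> A \<Longrightarrow> c \<otimes> x = x \<otimes> c"
    and a: "a \<in> generate G A"
  shows "c \<otimes> a = a \<otimes> c"
  using a
proof (induction rule: generate.induct)
  case one
  then show ?case using c by simp
next
  case (incl x)
  then show ?case by (rule commute)
next
  case (inv x)
  then have x: "x \<in> carrier G" using A by auto
  have "c \<otimes> inv x = inv x \<otimes> (x \<otimes> c) \<otimes> inv x"
    using x c by (simp flip: m_assoc)
  also have "\<dots> = inv x \<otimes> (c \<otimes> x) \<otimes> inv x"
    using commute[OF inv] by simp
  also have "\<dots> = inv x \<otimes> c"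
    using x c by (simp add: m_assoc)
  finally show ?case .
next
  case (eng x y)
  have xy: "x \<in> carrier G" "y \<in> carrier G" using eng.hyps generate_in_carrier[OF A] by auto
  have "c \<otimes> (x \<otimes> y) = x \<otimes> (c \<otimes> y)" using eng.IH(1) xy c by (simp flip: m_assoc)
  also have "\<dots> = (x \<otimes> y) \<otimes> c" using eng.IH(2) xy c by (simp add: m_assoc)
  finally show ?case .
qed

lemma (in group) comm_group_generateI:
  assumes A: "A \<subseteq> carrier G" and gen: "generate G A = carrier G"
    and commute: "\<And>x y. x \<in> A \<Longrightarrow> y \<in> A \<Longrightarrow> x \<otimes> y = y \<otimes> x"
  shows "comm_group G"
proof (rule group_comm_groupI)
  fix a b assume a: "a \<in> carrier G" and b: "b \<in> carrier G"
  have "x \<otimes> a = a \<otimes> x" if "x \<in> A" for x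
    using commute_with_generate[OF A _ commute] that A a gen by blast
  then show "a \<otimes> b = b \<otimes> a"
    using commute_with_generate[OF A a] b gen by (metis)
qed

lemma (in group) normal_generatorsI:
  assumes H: "subgroup H G" and A: "A \<subseteq> carrier G" and gen: "generate G A = carrier G"
    and conj: "\<And>x h. x \<in> A \<Longrightarrow> h \<in> H \<Longrightarrow> x \<otimes> h \<otimes> inv x \<in> H"
    and conj_inv: "\<And>x h. x \<in> A \<Longrightarrow> h \<in> H \<Longrightarrow> inv x \<otimes> h \<otimes> x \<in> H"
  shows "H \<lhd> G"
proof (rule normal_invI[OF H])
  fix g h assume "g \<in> carrier G" and h: "h \<in> H"
  then have "g \<in> generate G A" using gen by simp
  then show "g \<otimes> h \<otimes> inv g \<in> H"
    using h
  proof (induction arbitrary: h rule: generate.induct)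
    case one
    then show ?case using subgroup.mem_carrier[OF H] by simp
  next
    case (incl x)
    then show ?case by (rule conj)
  next
    case (inv x)
    then show ?case using conj_inv A by auto
  next
    case (eng x y)
    have "x \<in> carrier G" "y \<in> carrier G" "h \<in> carrier G"
      using eng.hyps eng.prems generate_in_carrier[OF A] subgroup.mem_carrier[OF H] by auto
    then have "x \<otimes> y \<otimes> h \<otimes> inv (x \<otimes> y) = x \<otimes> (y \<otimes> h \<otimes> inv y) \<otimes> inv x"
      by (simp add: inv_mult_group m_assoc)
    then show ?case using eng.IH eng.prems by simp
  qed
qed

lemma (in group_hom) hom_one_if_one_on_generators:
  assumes A: "A \<subseteq> carrier G" and gen: "generate G A = carrier G"
    and one: "\<And>x. x \<in> A \<Longrightarrow> h x = \<one>\<^bsub>H\<^esub>" and a: "a \<in> carrier G"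
  shows "h a = \<one>\<^bsub>H\<^esub>"
proof -
  have "h ` A \<subseteq> {\<one>\<^bsub>H\<^esub>}" using one by blast
  then have "generate H (h ` A) \<subseteq> {\<one>\<^bsub>H\<^esub>}"
    using H.mono_generate H.generate_one by metis
  then show ?thesis using generate_img[OF A] gen a by blast
qed

lemma (in group) hom_div_hom:
  assumes H: "comm_group H" and f: "f \<in> hom G H" and g: "g \<in> hom G H"
  shows "(\<lambda>x. f x \<otimes>\<^bsub>H\<^esub> inv\<^bsub>H\<^esub> g x) \<in> hom G H"
proof -
  interpret H: comm_group H by (rule H)
  interpret f: group_hom G H f by (intro group_hom.intro group_hom_axioms.intro is_group H.is_group f)
  interpret g: group_hom G H g by (intro group_hom.intro group_hom_axioms.intro is_group H.is_group g)
  show ?thesis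
    by (rule homI) (simp_all add: H.inv_mult H.m_ac)
qed

lemma (in normal) comm_group_FactGroupI:
  assumes A: "A \<subseteq> carrier G" and gen: "generate G A = carrier G"
    and derived: "\<And>a b. a \<in> A \<Longrightarrow> b \<in> A \<Longrightarrow> a \<otimes> b \<otimes> inv a \<otimes> inv b \<in> H"
  shows "comm_group (G Mod H)"
proof -
  interpret Q: group "G Mod H" by (rule factorgroup_is_group)
  interpret \<pi>: group_hom G "G Mod H" "\<lambda>x. H #> x"
    by (intro group_hom.intro group_hom_axioms.intro is_group Q.is_group r_coset_hom_Mod)
  show ?thesis
  proof (rule Q.comm_group_generateI)
    show "(\<lambda>x. H #> x) ` A \<subseteq> carrier (G Mod H)" using A by auto
    show "generate (G Mod H) ((\<lambda>x. H #> x) ` A) = carrier (G Mod H)"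
      using \<pi>.generate_img[OF A] gen carrier_FactGroup[of G H] by simp
  next
    fix u v assume "u \<in> (\<lambda>x. H #> x) ` A" "v \<in> (\<lambda>x. H #> x) ` A"
    then obtain a b where ab: "a \<in> A" "b \<in> A" and uv: "u = H #> a" "v = H #> b" by blast
    have abG: "a \<in> carrier G" "b \<in> carrier G" using ab A by auto
    have "u \<otimes>\<^bsub>G Mod H\<^esub> v \<otimes>\<^bsub>G Mod H\<^esub> inv\<^bsub>G Mod H\<^esub> u \<otimes>\<^bsub>G Mod H\<^esub> inv\<^bsub>G Mod H\<^esub> v
        = H #> (a \<otimes> b \<otimes> inv a \<otimes> inv b)"
      using abG uv by simp
    also have "\<dots> = \<one>\<^bsub>G Mod H\<^esub>"
      using coset_join2[OF _ subgroup_axioms derived[OF ab]] abG by simp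
    finally show "u \<otimes>\<^bsub>G Mod H\<^esub> v = v \<otimes>\<^bsub>G Mod H\<^esub> u"
      using Q.derived_set_elem_eq_one_iff abG uv by simp
  qed
qed

lemma (in normal) rcos_image_eq_carrier_FactGroup:
  assumes K: "subgroup K G" and gen: "generate G A = carrier G" and A: "A \<subseteq> K \<union> H"
  shows "(\<lambda>k. H #> k) ` K = carrier (G Mod H)"
proof -
  interpret Q: group "G Mod H" by (rule factorgroup_is_group)
  interpret \<pi>: group_hom G "G Mod H" "\<lambda>x. H #> x"
    by (intro group_hom.intro group_hom_axioms.intro is_group Q.is_group r_coset_hom_Mod)
  have AG: "A \<subseteq> carrier G" using A subgroup.subset[OF K] subset by blast
  have "(\<lambda>x. H #> x) ` A \<subseteq> (\<lambda>k. H #> k) ` K"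
  proof
    fix u assume "u \<in> (\<lambda>x. H #> x) ` A"
    then obtain a where a: "a \<in> A" "u = H #> a" by blast
    show "u \<in> (\<lambda>k. H #> k) ` K"
    proof (cases "a \<in> K")
      case True
      then show ?thesis using a by blast
    next
      case False
      then have "u = H #> \<one>" using a A coset_join2[OF _ subgroup_axioms] subset by auto
      then show ?thesis using subgroup.one_closed[OF K] by blast
    qed
  qed
  then have "generate (G Mod H) ((\<lambda>x. H #> x) ` A) \<subseteq> (\<lambda>k. H #> k) ` K"
    by (rule Q.generate_subgroup_incl[OF _ \<pi>.subgroup_img_is_subgroup[OF K]])
  moreover have "(\<lambda>k. H #> k) ` K \<subseteq> carrier (G Mod H)"
    using subgroup.subset[OF K] by auto
  ultimately show ?thesis
    using \<pi>.generate_img[OF AG] gen carrier_FactGroup[of G H] by auto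
qed

locale normal_complement = normal N G for N and G (structure) +
  fixes K
  assumes subgroup_complement: "subgroup K G"
    and inj_on_rcos: "inj_on (\<lambda>k. N #> k) K"
    and rcos_image: "(\<lambda>k. N #> k) ` K = carrier (G Mod N)"
begin

definition proj :: "'a \<Rightarrow> 'a" where
  "proj x = inv_into K (\<lambda>k. N #> k) (N #> x)"

lemma proj_in_complement: "x \<in> carrier G \<Longrightarrow> proj x \<in> K"
  unfolding proj_def using rcos_image by (intro inv_into_into) (auto simp: carrier_FactGroup)

lemma rcos_proj: "x \<in> carrier G \<Longrightarrow> N #> proj x = N #> x"
  unfolding proj_def using rcos_image by (intro f_inv_into_f) (auto simp: carrier_FactGroup)

lemma proj_eqI: "k \<in> K \<Longrightarrow> N #> k = N #> x \<Longrightarrow> proj x = k"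
  unfolding proj_def by (metis inv_into_f_f inj_on_rcos)

lemma proj_complement: "k \<in> K \<Longrightarrow> proj k = k"
  by (rule proj_eqI) simp_all

lemma proj_normal: "n \<in> N \<Longrightarrow> proj n = \<one>"
  by (rule proj_eqI) (simp_all add: subgroup.one_closed[OF subgroup_complement] coset_join2 is_subgroup)

lemma proj_hom: "proj \<in> hom G G"
proof (rule homI)
  fix x y assume x: "x \<in> carrier G" and y: "y \<in> carrier G"
  have K: "proj x \<in> K" "proj y \<in> K" using proj_in_complement x y by auto
  then have G: "proj x \<in> carrier G" "proj y \<in> carrier G"
    using subgroup.subset[OF subgroup_complement] by auto
  show "proj (x \<otimes> y) = proj x \<otimes> proj y"
  proof (rule proj_eqI)
    show "proj x \<otimes> proj y \<in> K" using K subgroup.m_closed[OF subgroup_complement] by blast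
    show "N #> (proj x \<otimes> proj y) = N #> (x \<otimes> y)"
      using rcos_sum[OF G] rcos_sum[OF x y] rcos_proj x y by simp
  qed
qed (use proj_in_complement subgroup.subset[OF subgroup_complement] in blast)

lemma proj_mult_inv_eq_one:
  assumes "x \<in> carrier G" "z \<in> carrier G" "N #> x = N #> z"
  shows "proj (x \<otimes> inv z) = \<one>"
proof -
  interpret proj: group_hom G G proj
    by (intro group_hom.intro group_hom_axioms.intro is_group proj_hom)
  have "proj x = proj z" using assms(3) unfolding proj_def by simp
  then show ?thesis using assms by simp
qed

end

abbreviation (in group) retraction_onto :: "'a set \<Rightarrow> 'a set \<Rightarrow> 'a \<Rightarrow> 'a" where
  "retraction_onto Y S \<equiv> normal_complement.proj (normal_closure G (Y - S)) G (generate G S)"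

lemma (in group) retractive_normal_complement:
  assumes Y: "Y \<subseteq> carrier G" and gen: "generate G Y = carrier G" and S: "retractive G Y S"
  shows "normal_complement (normal_closure G (Y - S)) G (generate G S)"
proof -
  have SY: "S \<subseteq> Y" using S unfolding retractive_def by blast
  have N: "normal_closure G (Y - S) \<lhd> G" using Y by (intro normal_closure_normal) auto
  show ?thesis
  proof (intro normal_complement.intro normal_complement_axioms.intro N)
    show "subgroup (generate G S) G" using SY Y by (intro generate_is_subgroup) auto
    moreover have "Y \<subseteq> generate G S \<union> normal_closure G (Y - S)"
      using generate.incl[of _ S G] subset_normal_closure[of "Y - S"] Y by blast
    ultimately show "(\<lambda>k. normal_closure G (Y - S) #> k) ` generate G S
        = carrier (G Mod normal_closure G (Y - S))"
      by (rule normal.rcos_image_eq_carrier_FactGroup[OF N _ gen])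
    show "inj_on (\<lambda>k. normal_closure G (Y - S) #> k) (generate G S)"
      using S unfolding retractive_def rhoS_def by blast
  qed
qed

text \<open>
  \<open>r S\<close> stands for \<open>\<rho>\<^sub>S\<close> followed by the identification \<open>G\<^sub>S \<cong> \<langle>S\<rangle>\<close>; the commutator
  hypotheses (i) and (ii) are stated as commutation.
\<close>
locale retraction_system = group G for G (structure) +
  fixes Y :: "'a set" and \<S> :: "'a set set" and r :: "'a set \<Rightarrow> 'a \<Rightarrow> 'a"
  assumes generators: "Y \<subseteq> carrier G" and generate_eq: "generate G Y = carrier G"
    and finite_family: "finite \<S>" and family_covers: "\<Union>\<S> = Y"
    and retraction_hom: "S \<in> \<S> \<Longrightarrow> r S \<in> hom G G"
    and retraction_fixes: "S \<in> \<S> \<Longrightarrow> s \<in> generate G S \<Longrightarrow> r S s = s"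
    and retraction_kills: "S \<in> \<S> \<Longrightarrow> y \<in> Y - S \<Longrightarrow> r S y = \<one>"
    and transverse_commute:
      "a \<in> Y \<Longrightarrow> b \<in> Y \<Longrightarrow> transverse {a, b} \<S> \<Longrightarrow> a \<otimes> b = b \<otimes> a"
    and derived_commute:
      "S \<in> \<S> \<Longrightarrow> a \<in> Y - S \<Longrightarrow> h \<in> derived G (generate G S) \<Longrightarrow> a \<otimes> h = h \<otimes> a"
begin

lemma member_subset_carrier: "S \<in> \<S> \<Longrightarrow> S \<subseteq> carrier G"
  using family_covers generators by blast

lemma subgroup_generate_member: "S \<in> \<S> \<Longrightarrow> subgroup (generate G S) G"
  by (rule generate_is_subgroup[OF member_subset_carrier])

lemma subgroup_derived_member: "S \<in> \<S> \<Longrightarrow> subgroup (derived G (generate G S)) G"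
  by (rule derived_is_subgroup[OF subgroup.subset[OF subgroup_generate_member]])

lemma retraction_group_hom: "S \<in> \<S> \<Longrightarrow> group_hom G G (r S)"
  by (intro group_hom.intro group_hom_axioms.intro is_group retraction_hom)

lemma derived_member_normal:
  assumes S: "S \<in> \<S>"
  shows "derived G (generate G S) \<lhd> G"
proof -
  let ?H = "generate G S" and ?D = "derived G (generate G S)"
  have D: "?D \<subseteq> carrier G" using subgroup.subset[OF subgroup_derived_member[OF S]] .
  have conj_member: "s \<otimes> h \<otimes> inv s \<in> ?D" if s: "s \<in> ?H" and h: "h \<in> ?D" for s h
  proof -
    interpret H: group "G\<lparr>carrier := ?H\<rparr>"
      by (rule subgroup_imp_group[OF subgroup_generate_member[OF S]])
    have "?D \<lhd> G\<lparr>carrier := ?H\<rparr>"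
      by (rule derived_subgroup_is_normal[OF subgroup_generate_member[OF S]])
    then have "s \<otimes> h \<otimes> inv\<^bsub>G\<lparr>carrier := ?H\<rparr>\<^esub> s \<in> ?D"
      using normal.inv_op_closed2 s h by fastforce
    then show ?thesis using m_inv_consistent[OF subgroup_generate_member[OF S] s] by simp
  qed
  have conj_outside: "y \<otimes> h \<otimes> inv y = h" "inv y \<otimes> h \<otimes> y = h"
    if y: "y \<in> Y - S" and h: "h \<in> ?D" for y h
  proof -
    have yh: "y \<in> carrier G" "h \<in> carrier G" using y h generators D by auto
    have c: "y \<otimes> h = h \<otimes> y" by (rule derived_commute[OF S y h])
    show "y \<otimes> h \<otimes> inv y = h" using yh by (simp add: c m_assoc)
    show "inv y \<otimes> h \<otimes> y = h" using yh by (simp add: m_assoc inv_solve_left' flip: c)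
  qed
  show ?thesis
  proof (rule normal_generatorsI[OF subgroup_derived_member[OF S] generators generate_eq])
    fix y h assume y: "y \<in> Y" and h: "h \<in> ?D"
    show "y \<otimes> h \<otimes> inv y \<in> ?D"
    proof (cases "y \<in> S")
      case True
      then show ?thesis using conj_member[OF generate.incl h] by simp
    next
      case False
      then show ?thesis using conj_outside(1)[of y h] y h by simp
    qed
    show "inv y \<otimes> h \<otimes> y \<in> ?D"
    proof (cases "y \<in> S")
      case True
      then have "inv y \<otimes> h \<otimes> inv (inv y) \<in> ?D" using conj_member[OF generate.inv h] by simp
      then show ?thesis using y generators by auto
    next
      case False
      then show ?thesis using conj_outside(2)[of y h] y h by simp
    qed
  qed
qed

lemma retraction_image_generate:
  assumes S: "S \<in> \<S>" and T: "T \<in> \<S>"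
  shows "r S ` generate G T \<subseteq> generate G T"
proof -
  have "r S ` T \<subseteq> generate G T"
  proof
    fix z assume "z \<in> r S ` T"
    then obtain t where t: "t \<in> T" and z: "z = r S t" by blast
    show "z \<in> generate G T"
    proof (cases "t \<in> S")
      case True
      then show ?thesis using retraction_fixes[OF S generate.incl[OF True]] t z generate.incl by metis
    next
      case False
      then have "z = \<one>" using retraction_kills[OF S] t z T family_covers by blast
      then show ?thesis using generate.one by metis
    qed
  qed
  then have "generate G (r S ` T) \<subseteq> generate G T"
    by (rule generate_subgroup_incl[OF _ subgroup_generate_member[OF T]])
  then show ?thesis
    using group_hom.generate_img[OF retraction_group_hom[OF S] member_subset_carrier[OF T]] by simp
qed

lemma retraction_image_derived:
  assumes S: "S \<in> \<S>" and T: "T \<in> \<S>"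
  shows "r S ` derived G (generate G T) \<subseteq> derived G (generate G T)"
  using group_hom.derived_img[OF retraction_group_hom[OF S]
      subgroup.subset[OF subgroup_generate_member[OF T]]]
    mono_derived[OF retraction_image_generate[OF S T]] by simp

definition derived_span :: "'a set set \<Rightarrow> 'a set" where
  "derived_span \<T> = generate G (\<Union>T\<in>\<T>. derived G (generate G T))"

lemma derived_union_subset_carrier: "\<T> \<subseteq> \<S> \<Longrightarrow> (\<Union>T\<in>\<T>. derived G (generate G T)) \<subseteq> carrier G"
  using subgroup.subset[OF subgroup_derived_member] by blast

lemma subgroup_derived_span: "\<T> \<subseteq> \<S> \<Longrightarrow> subgroup (derived_span \<T>) G"
  unfolding derived_span_def by (rule generate_is_subgroup[OF derived_union_subset_carrier])

lemma derived_span_normal: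
  assumes "\<T> \<subseteq> \<S>"
  shows "derived_span \<T> \<lhd> G"
  unfolding derived_span_def
proof (rule normal_generateI[OF derived_union_subset_carrier[OF assms]])
  fix h g assume "h \<in> (\<Union>T\<in>\<T>. derived G (generate G T))" and g: "g \<in> carrier G"
  then obtain T where "T \<in> \<T>" "h \<in> derived G (generate G T)" by blast
  then show "g \<otimes> h \<otimes> inv g \<in> (\<Union>T\<in>\<T>. derived G (generate G T))"
    using normal.inv_op_closed2[OF derived_member_normal g] assms by blast
qed

lemma retraction_image_derived_span:
  assumes S: "S \<in> \<S>" and \<T>: "\<T> \<subseteq> \<S>"
  shows "r S ` derived_span \<T> \<subseteq> derived_span \<T>"
proof -
  have "r S ` derived_span \<T> = generate G (r S ` (\<Union>T\<in>\<T>. derived G (generate G T)))"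
    unfolding derived_span_def
    using group_hom.generate_img[OF retraction_group_hom[OF S] derived_union_subset_carrier[OF \<T>]]
    by simp
  also have "\<dots> \<subseteq> derived_span \<T>"
    unfolding derived_span_def using retraction_image_derived[OF S] \<T>
    by (intro mono_generate) blast
  finally show ?thesis .
qed

lemma derived_span_insert:
  assumes S: "S \<in> \<S>" and \<T>: "\<T> \<subseteq> \<S>"
  shows "derived_span (insert S \<T>) \<subseteq> derived G (generate G S) <#> derived_span \<T>"
  unfolding derived_span_def[of "insert S \<T>"]
proof (rule generate_subgroup_incl)
  show "subgroup (derived G (generate G S) <#> derived_span \<T>) G"
    by (rule mult_norm_subgroup[OF derived_member_normal[OF S] subgroup_derived_span[OF \<T>]])
  let ?D = "derived G (generate G S)"
  have prod: "d \<otimes> m \<in> ?D <#> derived_span \<T>" if "d \<in> ?D" "m \<in> derived_span \<T>" for d m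
    using that unfolding set_mult_def by blast
  have "d \<in> ?D <#> derived_span \<T>" if d: "d \<in> ?D" for d
    using prod[OF d subgroup.one_closed[OF subgroup_derived_span[OF \<T>]]]
      subgroup.mem_carrier[OF subgroup_derived_member[OF S] d] by simp
  moreover have "m \<in> ?D <#> derived_span \<T>" if m: "m \<in> (\<Union>T\<in>\<T>. derived G (generate G T))" for m
  proof -
    have "m \<in> derived_span \<T>" unfolding derived_span_def using m by (rule generate.incl)
    moreover have "m \<in> carrier G" using derived_union_subset_carrier[OF \<T>] m by blast
    ultimately show ?thesis
      using prod[OF subgroup.one_closed[OF subgroup_derived_member[OF S]], of m] by simp
  qed
  ultimately show "(\<Union>T\<in>insert S \<T>. derived G (generate G T))
      \<subseteq> derived G (generate G S) <#> derived_span \<T>" by blast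
qed

lemma eq_one_if_mem_derived_span:
  assumes "finite \<T>" "\<T> \<subseteq> \<S>"
  shows "g \<in> derived_span \<T> \<Longrightarrow> (\<And>S. S \<in> \<T> \<Longrightarrow> r S g = \<one>) \<Longrightarrow> g = \<one>"
  using assms
proof (induction \<T> arbitrary: g rule: finite_induct)
  case empty
  then show ?case unfolding derived_span_def using generate_empty by simp
next
  case (insert S \<T>)
  then have S: "S \<in> \<S>" and \<T>: "\<T> \<subseteq> \<S>" by auto
  obtain d m where d: "d \<in> derived G (generate G S)" and m: "m \<in> derived_span \<T>" and g: "g = d \<otimes> m"
    using derived_span_insert[OF S \<T>] insert.prems(1) unfolding set_mult_def by blast
  have dm: "d \<in> carrier G" "m \<in> carrier G"
    using d m subgroup.subset[OF subgroup_derived_member[OF S]] subgroup.subset[OF subgroup_derived_span[OF \<T>]]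
    by auto
  have "r S d = d"
    using retraction_fixes[OF S] derived_incl[OF _ subgroup_generate_member[OF S]] d by blast
  then have "d \<otimes> r S m = \<one>"
    using insert.prems(2)[of S] g hom_mult[OF retraction_hom[OF S] dm] by simp
  then have "d = inv (r S m)"
    using dm hom_in_carrier[OF retraction_hom[OF S] dm(2)] by (simp add: inv_equality)
  moreover have "r S m \<in> derived_span \<T>" using retraction_image_derived_span[OF S \<T>] m by blast
  ultimately have "g \<in> derived_span \<T>"
    using g m subgroup.m_closed[OF subgroup_derived_span[OF \<T>]]
      subgroup.m_inv_closed[OF subgroup_derived_span[OF \<T>]] by simp
  then show ?case using insert.IH[OF _ _ \<T>] insert.prems(2) by blast
qed

lemma comm_group_FactGroup_derived_span: "comm_group (G Mod derived_span \<S>)"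
proof (rule normal.comm_group_FactGroupI[OF derived_span_normal generators generate_eq])
  fix a b assume a: "a \<in> Y" and b: "b \<in> Y"
  show "a \<otimes> b \<otimes> inv a \<otimes> inv b \<in> derived_span \<S>"
  proof (cases "transverse {a, b} \<S>")
    case True
    then have "a \<otimes> b \<otimes> inv a \<otimes> inv b = \<one>"
      using transverse_commute[OF a b] derived_set_elem_eq_one_iff a b generators by blast
    then show ?thesis using subgroup.one_closed[OF subgroup_derived_span] by simp
  next
    case False
    then obtain S where S: "S \<in> \<S>" and ab: "a \<in> S" "b \<in> S" unfolding transverse_def by blast
    then have "a \<otimes> b \<otimes> inv a \<otimes> inv b \<in> derived_set G (generate G S)"
      using generate.incl[of a S G] generate.incl[of b S G] by blast
    then have "a \<otimes> b \<otimes> inv a \<otimes> inv b \<in> derived G (generate G S)"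
      unfolding derived_def by (rule generate.incl)
    then show ?thesis
      unfolding derived_span_def using S by (blast intro: generate.incl)
  qed
qed simp

lemma exists_hom_twisted_by_retractions:
  assumes H: "comm_group H" and h: "h \<in> hom G H" and "finite \<T>" "\<T> \<subseteq> \<S>"
  shows "\<exists>\<psi>\<in>hom G H. (\<forall>y\<in>Y. \<psi> y = (if y \<in> \<Union>\<T> then \<one>\<^bsub>H\<^esub> else h y))
           \<and> (\<forall>g\<in>carrier G. (\<forall>S\<in>\<T>. r S g = \<one>) \<longrightarrow> \<psi> g = h g)"
  using \<open>finite \<T>\<close> \<open>\<T> \<subseteq> \<S>\<close>
proof (induction \<T> rule: finite_induct)
  case empty
  then show ?case using h by auto
next
  case (insert S \<T>)
  interpret H: comm_group H by (rule H)
  from insert obtain \<psi> where \<psi>: "\<psi> \<in> hom G H"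
    and \<psi>_gen: "\<And>y. y \<in> Y \<Longrightarrow> \<psi> y = (if y \<in> \<Union>\<T> then \<one>\<^bsub>H\<^esub> else h y)"
    and \<psi>_fix: "\<And>g. g \<in> carrier G \<Longrightarrow> \<forall>S\<in>\<T>. r S g = \<one> \<Longrightarrow> \<psi> g = h g"
    by auto
  have S: "S \<in> \<S>" using insert.prems by blast
  interpret \<psi>: group_hom G H \<psi> by (intro group_hom.intro group_hom_axioms.intro is_group H.is_group \<psi>)
  define \<psi>' where "\<psi>' x = \<psi> x \<otimes>\<^bsub>H\<^esub> inv\<^bsub>H\<^esub> \<psi> (r S x)" for x
  have "\<psi>' \<in> hom G H"
    unfolding \<psi>'_def using hom_div_hom[OF H \<psi> Group.hom_compose[OF retraction_hom[OF S] \<psi>]]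
    by (simp add: comp_def)
  moreover have "\<psi>' y = (if y \<in> \<Union>(insert S \<T>) then \<one>\<^bsub>H\<^esub> else h y)" if y: "y \<in> Y" for y
  proof (cases "y \<in> S")
    case True
    then show ?thesis
      using y generators retraction_fixes[OF S generate.incl[OF True]] unfolding \<psi>'_def by auto
  next
    case False
    then show ?thesis
      using y generators retraction_kills[OF S] \<psi>_gen[OF y] hom_in_carrier[OF h]
      unfolding \<psi>'_def by auto
  qed
  moreover have "\<psi>' g = h g" if "g \<in> carrier G" "\<forall>S'\<in>insert S \<T>. r S' g = \<one>" for g
    using that \<psi>_fix hom_in_carrier[OF h] unfolding \<psi>'_def by simp
  ultimately show ?case by blast
qed

lemma mem_derived_span_if_retractions_trivial:
  assumes g: "g \<in> carrier G" and trivial: "\<And>S. S \<in> \<S> \<Longrightarrow> r S g = \<one>"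
  shows "g \<in> derived_span \<S>"
proof -
  let ?Q = "G Mod derived_span \<S>"
  interpret N: normal "derived_span \<S>" G by (rule derived_span_normal) simp
  have \<pi>: "(\<lambda>x. derived_span \<S> #> x) \<in> hom G ?Q" by (rule N.r_coset_hom_Mod)
  obtain \<psi> where \<psi>: "\<psi> \<in> hom G ?Q"
    and \<psi>_gen: "\<forall>y\<in>Y. \<psi> y = (if y \<in> \<Union>\<S> then \<one>\<^bsub>?Q\<^esub> else derived_span \<S> #> y)"
    and \<psi>_fix: "\<forall>x\<in>carrier G. (\<forall>S\<in>\<S>. r S x = \<one>) \<longrightarrow> \<psi> x = derived_span \<S> #> x"
    using exists_hom_twisted_by_retractions[OF comm_group_FactGroup_derived_span \<pi> finite_family]
    by blast
  interpret \<psi>: group_hom G ?Q \<psi>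
    by (intro group_hom.intro group_hom_axioms.intro is_group N.factorgroup_is_group \<psi>)
  have "derived_span \<S> #> g = derived_span \<S>"
    using \<psi>.hom_one_if_one_on_generators[OF generators generate_eq _ g] \<psi>_gen \<psi>_fix
      family_covers g trivial by simp
  then show ?thesis by (rule coset_join1[OF _ g N.is_subgroup])
qed

theorem eq_one_if_retractions_trivial:
  "g \<in> carrier G \<Longrightarrow> (\<And>S. S \<in> \<S> \<Longrightarrow> r S g = \<one>) \<Longrightarrow> g = \<one>"
  using eq_one_if_mem_derived_span[OF finite_family] mem_derived_span_if_retractions_trivial by blast

end

lemma retractive_family_member:
  "retractive_family G Y \<S> \<Longrightarrow> S \<in> \<S> \<Longrightarrow> retractive G Y S"
  unfolding retractive_family_def by (metis cInf_singleton empty_not_insert empty_subsetI insert_subsetI)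

lemma (in group) retraction_system_retractive:
  assumes "finite Y" and Y: "Y \<subseteq> carrier G" and gen: "generate G Y = carrier G"
    and retractive: "\<And>S. S \<in> \<S> \<Longrightarrow> retractive G Y S" and covers: "\<Union>\<S> = Y"
    and transverse: "\<forall>a\<in>Y. \<forall>b\<in>Y. transverse {a, b} \<S> \<longrightarrow> commutator G a b = \<one>\<^bsub>G\<^esub>"
    and derived: "\<forall>S\<in>\<S>. \<forall>a\<in>Y - S. \<forall>h\<in>derived G (generate G S). commutator G a h = \<one>\<^bsub>G\<^esub>"
  shows "retraction_system G Y \<S> (retraction_onto Y)"
proof -
  note complement = retractive_normal_complement[OF Y gen retractive]
  show ?thesis
  proof (unfold_locales)
    show "finite \<S>" using \<open>finite Y\<close> covers by (metis finite_UnionD)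
  next
    fix S s assume "S \<in> \<S>" "s \<in> generate G S"
    then show "retraction_onto Y S s = s"
      by (rule normal_complement.proj_complement[OF complement])
  next
    fix S y assume S: "S \<in> \<S>" and y: "y \<in> Y - S"
    have "y \<in> normal_closure G (Y - S)" using subset_normal_closure[of "Y - S"] Y y by blast
    then show "retraction_onto Y S y = \<one>"
      by (rule normal_complement.proj_normal[OF complement[OF S]])
  next
    fix a b assume "a \<in> Y" "b \<in> Y" "transverse {a, b} \<S>"
    then show "a \<otimes> b = b \<otimes> a" using transverse commutator_eq_one_iff Y by blast
  next
    fix S a h assume S: "S \<in> \<S>" and a: "a \<in> Y - S" and h: "h \<in> derived G (generate G S)"
    have "S \<subseteq> carrier G" using S covers Y by blast
    then have "h \<in> carrier G"
      using h derived_in_carrier[OF generate_incl] by blast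
    then show "a \<otimes> h = h \<otimes> a" using derived S a h commutator_eq_one_iff Y by blast
  next
    fix S assume "S \<in> \<S>"
    then show "retraction_onto Y S \<in> hom G G"
      by (rule normal_complement.proj_hom[OF complement])
  qed (fact Y gen covers)+
qed

theorem (in group) inj_on_rho_family:
  assumes "finite Y" and Y: "Y \<subseteq> carrier G" and gen: "generate G Y = carrier G"
    and retractive: "\<And>S. S \<in> \<S> \<Longrightarrow> retractive G Y S" and "\<Union>\<S> = Y"
    and "\<forall>a\<in>Y. \<forall>b\<in>Y. transverse {a, b} \<S> \<longrightarrow> commutator G a b = \<one>"
    and "\<forall>S\<in>\<S>. \<forall>a\<in>Y - S. \<forall>h\<in>derived G (generate G S). commutator G a h = \<one>"
  shows "inj_on (rho_family G Y \<S>) (carrier G)"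
proof (rule inj_onI)
  interpret retraction_system G Y \<S> "retraction_onto Y"
    using retraction_system_retractive[OF assms] .
  fix x z assume x: "x \<in> carrier G" and z: "z \<in> carrier G"
    and eq: "rho_family G Y \<S> x = rho_family G Y \<S> z"
  have "x \<otimes> inv z = \<one>"
  proof (rule eq_one_if_retractions_trivial)
    fix S assume S: "S \<in> \<S>"
    then have "normal_closure G (Y - S) #> x = normal_closure G (Y - S) #> z"
      using fun_cong[OF eq, of S] unfolding rho_family_def rhoS_def by simp
    then show "retraction_onto Y S (x \<otimes> inv z) = \<one>"
      using normal_complement.proj_mult_inv_eq_one[OF _ x z]
        retractive_normal_complement[OF Y gen retractive[OF S]] by blast
  qed (use x z in simp)
  then show "x = z" using x z by (simp add: inv_solve_right')
qed

theorem mainTheorem8: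
  fixes G :: "('a, 'b) monoid_scheme" and Y :: "'a set" and \<S> :: "'a set set"
  assumes "group G"
    and "finite Y" and "Y \<subseteq> carrier G" and "generate G Y = carrier G"
    and "retractive_family G Y \<S>"
    and "\<Union>\<S> = Y"
    and "\<forall>S\<in>\<S>. \<forall>T\<in>\<S>. S \<subseteq> T \<longrightarrow> S = T"
    and "\<forall>a\<in>Y. \<forall>b\<in>Y. transverse {a, b} \<S> \<longrightarrow> commutator G a b = \<one>\<^bsub>G\<^esub>"
    and "\<forall>S\<in>\<S>. \<forall>a\<in>Y - S. \<forall>h\<in>derived G (generate G S). commutator G a h = \<one>\<^bsub>G\<^esub>"
  shows "inj_on (rho_family G Y \<S>) (carrier G)"
  using group.inj_on_rho_family[OF assms(1-4) retractive_family_member[OF assms(5)] assms(6,8,9)] .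

end
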